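(* Let $k,t\ge 2$ be integers and $1\le r\le t$. For $|q|<1$, \[ \sum_{n \geq 0} D_k^\times(r,t;n)q^n = \frac{(q^k;q^k)_\infty}{(q;q)_\infty}\sum_{\substack{m\ge 1,\ k \nmid m \\ m \equiv r \pmod t}} \frac{q^m}{1 - q^m}, \] and if $\gcd(k,t) = 1$ then \[ \sum_{n \geq 0} D_k^\times(r,t;n)q^n = \frac{(q^k;q^k)_\infty}{(q;q)_\infty}\left(\sum_{\substack{m\ge1\\ m \equiv r \pmod t}} \frac{q^m}{1 - q^m} - \sum_{\substack{m\ge 1\\ m \equiv \bar{r} \pmod t}} \frac{q^{mk}}{1 - q^{mk}}\right), \] where $1 \leq \bar{r} \leq t$ is the representative of $rk^{-1} \pmod t$.
   Context: A partition of $n$ is $k$-indivisible if none of its parts is divisible by $k$. $D_k^\times(r,t;n)$ denotes the total number of parts congruent to $r$ modulo $t$, counted with multiplicity over all $k$-indivisible partitions of $n$. $(a;q)_\infty \coloneqq \prod_{n\ge1}(1-aq^{n-1})$. *)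

theory Defs
  imports "HOL-Analysis.Analysis" "HOL-Library.Multiset" "HOL-Number_Theory.Cong"
begin

definition partitions :: "nat \<Rightarrow> nat multiset set" where
  "partitions n = {M. (\<forall>x\<in>#M. 0 < x) \<and> sum_mset M = n}"

definition k_indivisible :: "nat \<Rightarrow> nat multiset \<Rightarrow> bool" where
  "k_indivisible k M \<longleftrightarrow> (\<forall>x\<in>#M. \<not> k dvd x)"

definition Dx :: "nat \<Rightarrow> nat \<Rightarrow> nat \<Rightarrow> nat \<Rightarrow> nat" where
  "Dx k r t n = (\<Sum>M\<in>{M\<in>partitions n. k_indivisible k M}.
                    size (filter_mset (\<lambda>x. [x = r] (mod t)) M))"

definition qpoch_inf :: "complex \<Rightarrow> complex \<Rightarrow> complex" where
  "qpoch_inf a q = (\<Prod>n. 1 - a * q ^ n)"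

end

theory Submission
  imports Defs
begin

(* Let S be the positive integers not divisible by k, and T the elements of S congruent to r
   modulo t.  Removing j copies of a part m of T from a partition into parts from S gives
     Dx k r t n = sum_l #{m in T. m dvd l} * p_S(n - l),
   where p_S counts the partitions into parts from S.  Hence the generating function of Dx is
   the product of the Lambert series sum_(m in T) q^m/(1 - q^m) = sum_l #{m in T. m dvd l} q^l
   and sum_n p_S(n) q^n = prod_(m in S) 1/(1 - q^m) = (q^k;q^k)_inf / (q;q)_inf.  The product
   formula holds for finite truncations of S by multiplying geometric series, and passes to
   the limit by Tannery's theorem, the truncated products being bounded by exp(1/(1-|q|)^2).
   If gcd(k,t) = 1, the multiples of k congruent to r are exactly the jk with j = r k^-1
   (mod t), which gives the second formula. *)

section \<open>Partitions with parts from a given set\<close>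

lemma size_le_sum_mset: "\<forall>x\<in>#M. 0 < x \<Longrightarrow> size M \<le> sum_mset (M :: nat multiset)"
  by (induction M) auto

lemma member_le_sum_mset: "(x :: nat) \<in># M \<Longrightarrow> x \<le> sum_mset M"
  by (induction M) auto

lemma filter_plus_replicate_count: "filter_mset (\<lambda>x. x \<noteq> a) M + replicate_mset (count M a) a = M"
  by (auto simp: multiset_eq_iff)

lemma sum_mset_eq_filter_plus_count:
  "sum_mset M = sum_mset (filter_mset (\<lambda>x. x \<noteq> a) M) + count M a * (a :: nat)"
  by (subst (1) filter_plus_replicate_count[of a M, symmetric]) simp

lemma size_eq_sum_count:
  assumes "finite B" "set_mset M \<subseteq> B"
  shows "size M = (\<Sum>x\<in>B. count M x)"
  unfolding size_multiset_overloaded_eq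
  by (rule sum.mono_neutral_left) (use assms in \<open>auto simp: count_eq_zero_iff\<close>)

definition parts_in :: "nat set \<Rightarrow> nat \<Rightarrow> nat multiset set" where
  "parts_in A n = {M. set_mset M \<subseteq> A \<and> sum_mset M = n}"

lemma finite_parts_in:
  assumes "0 \<notin> A"
  shows "finite (parts_in A n)"
proof (rule finite_subset)
  show "parts_in A n \<subseteq> (\<Union>s\<le>n. multisets_of_size {1..n} s)"
  proof
    fix M assume M: "M \<in> parts_in A n"
    then have pos: "\<forall>x\<in>#M. 0 < x"
      using assms by (auto simp: parts_in_def intro: gr0I)
    have "size M \<le> n" using size_le_sum_mset[OF pos] M by (simp add: parts_in_def)
    moreover have "set_mset M \<subseteq> {1..n}"
      using M pos member_le_sum_mset by (fastforce simp: parts_in_def Suc_le_eq)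
    ultimately show "M \<in> (\<Union>s\<le>n. multisets_of_size {1..n} s)"
      by (auto simp: multisets_of_size_def)
  qed
qed auto

lemma parts_in_empty: "parts_in {} n = (if n = 0 then {{#}} else {})"
  by (auto simp: parts_in_def)

lemma parts_in_truncate: "n \<le> N \<Longrightarrow> parts_in (A \<inter> {..N}) n = parts_in A n"
  by (auto simp: parts_in_def dest: member_le_sum_mset)

lemma card_parts_in_mono: "0 \<notin> B \<Longrightarrow> A \<subseteq> B \<Longrightarrow> card (parts_in A n) \<le> card (parts_in B n)"
  by (rule card_mono[OF finite_parts_in]) (auto simp: parts_in_def)

lemma card_parts_in_insert:
  assumes "0 \<notin> A" "a \<notin> A" "0 < a"
  shows "card (parts_in (insert a A) n) = (\<Sum>i\<le>n. if a dvd n - i then card (parts_in A i) else 0)"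
proof -
  define I where "I = {i \<in> {..n}. a dvd n - i}"
  define glue where "glue = (\<lambda>(i, N). N + replicate_mset ((n - i) div a) a)"
  define unglue where "unglue = (\<lambda>M. (sum_mset (filter_mset (\<lambda>x. x \<noteq> a) M), filter_mset (\<lambda>x. x \<noteq> a) M))"
  have rest: "sum_mset (filter_mset (\<lambda>x. x \<noteq> a) M) \<le> n \<and>
               n - sum_mset (filter_mset (\<lambda>x. x \<noteq> a) M) = count M a * a"
    if "M \<in> parts_in (insert a A) n" for M
    using that sum_mset_eq_filter_plus_count[of M a] by (auto simp: parts_in_def)
  have "bij_betw glue (Sigma I (parts_in A)) (parts_in (insert a A) n)"
  proof (rule bij_betw_byWitness[where f' = unglue])
    have "filter_mset (\<lambda>x. x \<noteq> a) N = N" if "N \<in> parts_in A i" for N i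
      using that assms(2) by (auto simp: parts_in_def filter_mset_eq_conv)
    then show "\<forall>p \<in> Sigma I (parts_in A). unglue (glue p) = p"
      by (auto simp: I_def glue_def unglue_def parts_in_def)
    show "\<forall>M \<in> parts_in (insert a A) n. glue (unglue M) = M"
      using rest assms(3) by (simp add: glue_def unglue_def filter_plus_replicate_count)
    show "glue ` Sigma I (parts_in A) \<subseteq> parts_in (insert a A) n"
      by (auto simp: I_def glue_def parts_in_def split: if_splits)
    show "unglue ` parts_in (insert a A) n \<subseteq> Sigma I (parts_in A)"
      using rest by (auto simp: unglue_def I_def parts_in_def)
  qed
  then have "card (parts_in (insert a A) n) = card (Sigma I (parts_in A))"
    by (rule bij_betw_same_card[symmetric])
  also have "\<dots> = (\<Sum>i\<in>I. card (parts_in A i))"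
    by (rule card_SigmaI) (auto simp: I_def finite_parts_in assms(1))
  also have "\<dots> = (\<Sum>i\<le>n. if a dvd n - i then card (parts_in A i) else 0)"
    unfolding I_def by (rule sum.inter_filter) simp
  finally show ?thesis .
qed

lemma card_parts_in_count_ge:
  assumes "m \<in> A" "j * m \<le> n"
  shows "card {M \<in> parts_in A n. j \<le> count M m} = card (parts_in A (n - j * m))"
proof -
  have "bij_betw (\<lambda>N. N + replicate_mset j m) (parts_in A (n - j * m)) {M \<in> parts_in A n. j \<le> count M m}"
  proof (rule bij_betw_byWitness[where f' = "\<lambda>M. M - replicate_mset j m"])
    have "M - replicate_mset j m + replicate_mset j m = M \<and> sum_mset (M - replicate_mset j m) = n - j * m"
      if "M \<in> parts_in A n" "j \<le> count M m" for M
    proof -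
      have "replicate_mset j m \<subseteq># M"
        using that(2) by (simp add: count_le_replicate_mset_subset_eq)
      with that(1) show ?thesis
        by (simp add: sum_mset_diff parts_in_def)
    qed
    then show "\<forall>M \<in> {M \<in> parts_in A n. j \<le> count M m}. M - replicate_mset j m + replicate_mset j m = M"
      and "(\<lambda>M. M - replicate_mset j m) ` {M \<in> parts_in A n. j \<le> count M m} \<subseteq> parts_in A (n - j * m)"
      by (auto simp: parts_in_def dest: in_diffD)
  qed (use assms in \<open>auto simp: parts_in_def split: if_splits\<close>)
  then show ?thesis
    by (simp add: bij_betw_same_card)
qed

lemma sum_count_parts_in:
  assumes "0 \<notin> A" "m \<in> A"
  shows "(\<Sum>M\<in>parts_in A n. count M m) = (\<Sum>j\<in>{1..n div m}. card (parts_in A (n - j * m)))"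
proof -
  have "0 < m"
    using assms by (auto intro: gr0I)
  have count: "{j \<in> {1..n div m}. j \<le> count M m} = {1..count M m}" if "M \<in> parts_in A n" for M
  proof -
    have "count M m * m \<le> n"
      using that sum_mset_eq_filter_plus_count[of M m] by (simp add: parts_in_def)
    then have "count M m \<le> n div m"
      using \<open>0 < m\<close> by (simp add: less_eq_div_iff_mult_less_eq)
    then show ?thesis
      by auto
  qed
  have "(\<Sum>M\<in>parts_in A n. count M m) = (\<Sum>M\<in>parts_in A n. \<Sum>j\<in>{j \<in> {1..n div m}. j \<le> count M m}. 1)"
  proof (intro sum.cong refl)
    fix M assume "M \<in> parts_in A n"
    then show "count M m = (\<Sum>j\<in>{j \<in> {1..n div m}. j \<le> count M m}. 1)"
      unfolding count[OF \<open>M \<in> parts_in A n\<close>] by simp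
  qed
  also have "\<dots> = (\<Sum>j\<in>{1..n div m}. \<Sum>M\<in>{M \<in> parts_in A n. j \<le> count M m}. 1)"
    by (rule sum.swap_restrict) (simp_all add: finite_parts_in assms(1))
  also have "\<dots> = (\<Sum>j\<in>{1..n div m}. card (parts_in A (n - j * m)))"
  proof (intro sum.cong refl)
    fix j assume "j \<in> {1..n div m}"
    then have "j * m \<le> n"
      using \<open>0 < m\<close> by (simp add: less_eq_div_iff_mult_less_eq)
    then show "(\<Sum>M\<in>{M \<in> parts_in A n. j \<le> count M m}. 1) = card (parts_in A (n - j * m))"
      using card_parts_in_count_ge[OF assms(2)] by simp
  qed
  finally show ?thesis .
qed

lemma multiples_atLeastAtMost_eq_image:
  fixes k N :: nat
  assumes "0 < k"
  shows "{m \<in> {1..N}. k dvd m} = (\<lambda>j. k * j) ` {1..N div k}"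
proof (intro equalityI subsetI)
  fix m assume "m \<in> {m \<in> {1..N}. k dvd m}"
  then obtain j where j: "m = k * j" "1 \<le> k * j" "k * j \<le> N"
    by (auto elim!: dvdE)
  then have "1 \<le> j"
    by (simp add: Suc_le_eq)
  moreover have "j \<le> N div k"
    using j(3) assms by (simp add: less_eq_div_iff_mult_less_eq mult.commute)
  ultimately show "m \<in> (\<lambda>j. k * j) ` {1..N div k}"
    using j(1) by auto
qed (use assms in \<open>auto simp: less_eq_div_iff_mult_less_eq mult.commute\<close>)

lemma sum_divisor_count_eq:
  fixes f :: "nat \<Rightarrow> nat"
  assumes "0 \<notin> T"
  shows "(\<Sum>m\<in>T \<inter> {..n}. \<Sum>j\<in>{1..n div m}. f (m * j)) = (\<Sum>l\<in>{1..n}. card {m \<in> T. m dvd l} * f l)"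
proof -
  have inner: "(\<Sum>j\<in>{1..n div m}. f (m * j)) = (\<Sum>l\<in>{l \<in> {1..n}. m dvd l}. f l)" if "m \<in> T" for m
  proof -
    have "0 < m"
      using that assms by (auto intro: gr0I)
    then have "{l \<in> {1..n}. m dvd l} = (\<lambda>j. m * j) ` {1..n div m}"
      by (rule multiples_atLeastAtMost_eq_image)
    moreover have "inj_on (\<lambda>j. m * j) {1..n div m}"
      using \<open>0 < m\<close> by (auto intro: inj_onI)
    ultimately show ?thesis
      by (simp add: sum.reindex)
  qed
  have "(\<Sum>m\<in>T \<inter> {..n}. \<Sum>j\<in>{1..n div m}. f (m * j))
          = (\<Sum>m\<in>T \<inter> {..n}. \<Sum>l\<in>{l \<in> {1..n}. m dvd l}. f l)"
    by (intro sum.cong refl inner) simp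
  also have "\<dots> = (\<Sum>l\<in>{1..n}. \<Sum>m\<in>{m \<in> T \<inter> {..n}. m dvd l}. f l)"
    by (rule sum.swap_restrict) auto
  also have "\<dots> = (\<Sum>l\<in>{1..n}. card {m \<in> T. m dvd l} * f l)"
  proof (intro sum.cong refl)
    fix l assume "l \<in> {1..n}"
    then have "{m \<in> T \<inter> {..n}. m dvd l} = {m \<in> T. m dvd l}"
      by (auto dest: dvd_imp_le)
    then show "(\<Sum>m\<in>{m \<in> T \<inter> {..n}. m dvd l}. f l) = card {m \<in> T. m dvd l} * f l"
      by simp
  qed
  finally show ?thesis .
qed

lemma sum_size_filter_parts_in:
  assumes "0 \<notin> S" "T \<subseteq> S"
  shows "(\<Sum>M\<in>parts_in S n. size (filter_mset (\<lambda>x. x \<in> T) M))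
           = (\<Sum>l\<le>n. card {m \<in> T. m dvd l \<and> l \<noteq> 0} * card (parts_in S (n - l)))"
proof -
  have "size (filter_mset (\<lambda>x. x \<in> T) M) = (\<Sum>m\<in>T \<inter> {..n}. count M m)" if "M \<in> parts_in S n" for M
  proof -
    have "set_mset (filter_mset (\<lambda>x. x \<in> T) M) \<subseteq> T \<inter> {..n}"
      using that member_le_sum_mset by (fastforce simp: parts_in_def)
    then show ?thesis
      by (subst size_eq_sum_count[of "T \<inter> {..n}"]) auto
  qed
  then have "(\<Sum>M\<in>parts_in S n. size (filter_mset (\<lambda>x. x \<in> T) M))
      = (\<Sum>M\<in>parts_in S n. \<Sum>m\<in>T \<inter> {..n}. count M m)"
    by (rule sum.cong[OF refl])
  also have "\<dots> = (\<Sum>m\<in>T \<inter> {..n}. \<Sum>M\<in>parts_in S n. count M m)"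
    by (rule sum.swap)
  also have "\<dots> = (\<Sum>m\<in>T \<inter> {..n}. \<Sum>j\<in>{1..n div m}. card (parts_in S (n - m * j)))"
    using assms by (intro sum.cong refl) (auto simp: sum_count_parts_in mult.commute)
  also have "\<dots> = (\<Sum>l\<in>{1..n}. card {m \<in> T. m dvd l} * card (parts_in S (n - l)))"
    using assms by (intro sum_divisor_count_eq) auto
  also have "\<dots> = (\<Sum>l\<le>n. card {m \<in> T. m dvd l \<and> l \<noteq> 0} * card (parts_in S (n - l)))"
    by (rule sum.mono_neutral_cong_left) auto
  finally show ?thesis .
qed

section \<open>Generating functions of restricted partitions\<close>

lemma sums_multiples_iff:
  fixes g :: "nat \<Rightarrow> 'a::real_normed_vector"
  assumes "0 < a" "\<And>n. \<not> a dvd n \<Longrightarrow> g n = 0"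
  shows "(\<lambda>j. g (j * a)) sums s \<longleftrightarrow> g sums s"
proof (rule sums_mono_reindex)
  show "strict_mono (\<lambda>j. j * a)"
    using assms(1) by (auto intro: strict_monoI)
  show "g n = 0" if "n \<notin> range (\<lambda>j. j * a)" for n
    using that assms(2) by (metis dvdE mult.commute rangeI)
qed

lemma summable_norm_Cauchy_product:
  fixes a b :: "nat \<Rightarrow> 'a::{real_normed_algebra,banach}"
  assumes "summable (\<lambda>k. norm (a k))" "summable (\<lambda>k. norm (b k))"
  shows "summable (\<lambda>k. norm (\<Sum>i\<le>k. a i * b (k - i)))"
proof (rule summable_comparison_test)
  show "\<exists>N. \<forall>n\<ge>N. norm (norm (\<Sum>i\<le>n. a i * b (n - i))) \<le> (\<Sum>i\<le>n. norm (a i) * norm (b (n - i)))"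
    by (auto intro!: exI[of _ 0] order.trans[OF norm_sum] sum_mono norm_mult_ineq)
  show "summable (\<lambda>n. \<Sum>i\<le>n. norm (a i) * norm (b (n - i)))"
    using summable_Cauchy_product[of "\<lambda>i. norm (a i)" "\<lambda>i. norm (b i)"] assms by simp
qed

lemma sum_power_convolution:
  fixes q :: "'a::comm_semiring_1"
  shows "(\<Sum>i\<le>n. (a i * q ^ i) * (b (n - i) * q ^ (n - i))) = (\<Sum>i\<le>n. a i * b (n - i)) * q ^ n"
  unfolding sum_distrib_right
  by (intro sum.cong refl) (simp add: algebra_simps flip: power_add)

lemma norm_power_div_one_minus_power_le:
  fixes q :: "'a::real_normed_field"
  assumes "norm q < 1" "0 < m"
  shows "norm (q ^ m / (1 - q ^ m)) \<le> norm q ^ m / (1 - norm q)"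
proof -
  have "norm q ^ m \<le> norm q"
    using assms by (simp add: power_le_one_iff power_decreasing[of 1 m, simplified])
  moreover have "1 - norm q ^ m \<le> norm (1 - q ^ m)"
    using norm_triangle_ineq2[of 1 "q ^ m"] by (simp add: norm_power)
  ultimately have "1 - norm q \<le> norm (1 - q ^ m)"
    by linarith
  then have "norm q ^ m / norm (1 - q ^ m) \<le> norm q ^ m / (1 - norm q)"
    using assms(1) by (intro divide_left_mono mult_pos_pos) auto
  then show ?thesis
    by (simp add: norm_divide norm_power)
qed

lemma one_minus_power_neq_zero:
  fixes q :: "'a::real_normed_div_algebra"
  assumes "norm q < 1" "0 < m"
  shows "1 - q ^ m \<noteq> 0"
proof
  assume "1 - q ^ m = 0"
  then have "norm (q ^ m) = 1"
    by simp
  moreover have "norm (q ^ m) < 1"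
    using assms by (simp add: norm_power power_less_one_iff)
  ultimately show False
    by simp
qed

lemma sums_parts_in_insert:
  fixes q :: "'a::{real_normed_field,banach}"
  assumes "0 \<notin> A" "a \<notin> A" "0 < a" "norm q < 1"
    and summable: "summable (\<lambda>n. norm (of_nat (card (parts_in A n)) * q ^ n))"
    and sums: "(\<lambda>n. of_nat (card (parts_in A n)) * q ^ n) sums s"
  shows "summable (\<lambda>n. norm (of_nat (card (parts_in (insert a A) n)) * q ^ n))"
    and "(\<lambda>n. of_nat (card (parts_in (insert a A) n)) * q ^ n) sums (s / (1 - q ^ a))"
proof -
  define f where "f n = of_nat (card (parts_in A n)) * q ^ n" for n
  define g where "g n = (if a dvd n then q ^ n else 0)" for n
  have g_norm: "summable (\<lambda>n. norm (g n))"
    by (rule summable_comparison_test[of _ "\<lambda>n. norm q ^ n"])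
       (use assms(4) in \<open>auto simp: g_def norm_power\<close>)
  have g_sums: "g sums (1 / (1 - q ^ a))"
  proof (subst sums_multiples_iff[OF \<open>0 < a\<close>, symmetric])
    have "norm (q ^ a) < 1"
      using assms(3,4) by (simp add: norm_power power_less_one_iff)
    then show "(\<lambda>j. g (j * a)) sums (1 / (1 - q ^ a))"
      using geometric_sums[of "q ^ a"] by (simp add: g_def mult.commute flip: power_mult)
  qed (simp add: g_def)
  have coeff: "(\<Sum>i\<le>n. f i * g (n - i)) = of_nat (card (parts_in (insert a A) n)) * q ^ n" for n
  proof -
    have "(\<Sum>i\<le>n. f i * g (n - i)) =
          (\<Sum>i\<le>n. of_nat (if a dvd n - i then card (parts_in A i) else 0) * q ^ n)"
      by (intro sum.cong) (auto simp: f_def g_def mult.assoc simp flip: power_add)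
    then show ?thesis
      by (simp add: card_parts_in_insert[OF assms(1-3)] sum_distrib_right)
  qed
  have f: "summable (\<lambda>n. norm (f n))" "f sums s"
    unfolding f_def using summable sums by auto
  show "summable (\<lambda>n. norm (of_nat (card (parts_in (insert a A) n)) * q ^ n))"
    using summable_norm_Cauchy_product[OF f(1) g_norm] unfolding coeff .
  show "(\<lambda>n. of_nat (card (parts_in (insert a A) n)) * q ^ n) sums (s / (1 - q ^ a))"
    using Cauchy_product_sums[OF f(1) g_norm] f(2) g_sums unfolding coeff by (simp add: sums_iff)
qed

lemma parts_in_finite_sums:
  fixes q :: "'a::{real_normed_field,banach}"
  assumes "finite A" "0 \<notin> A" "norm q < 1"
  shows "summable (\<lambda>n. norm (of_nat (card (parts_in A n)) * q ^ n)) \<and>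
         (\<lambda>n. of_nat (card (parts_in A n)) * q ^ n) sums (\<Prod>m\<in>A. 1 / (1 - q ^ m))"
  using assms(1,2)
proof (induction A rule: finite_induct)
  case empty
  have "of_nat (card (parts_in {} n)) * q ^ n = (if n = 0 then 1 else 0)" for n
    by (simp add: parts_in_empty)
  moreover have "summable (\<lambda>n. norm (if n = 0 then 1 else 0 :: 'a))"
    by (rule summable_finite[of "{0}"]) auto
  ultimately show ?case
    using sums_single[of 0 "\<lambda>_. 1 :: 'a"] by simp
next
  case (insert a A)
  then have "0 < a" "0 \<notin> A"
    by auto
  with insert.IH have "summable (\<lambda>n. norm (of_nat (card (parts_in A n)) * q ^ n))"
    and "(\<lambda>n. of_nat (card (parts_in A n)) * q ^ n) sums (\<Prod>m\<in>A. 1 / (1 - q ^ m))"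
    by auto
  from sums_parts_in_insert[OF \<open>0 \<notin> A\<close> insert.hyps(2) \<open>0 < a\<close> assms(3) this]
  show ?case
    by (simp add: insert.hyps(1,2) divide_inverse mult.commute)
qed

lemma prod_inverse_one_minus_power_le_exp:
  fixes x :: real
  assumes "finite A" "0 \<notin> A" "0 \<le> x" "x < 1"
  shows "(\<Prod>m\<in>A. 1 / (1 - x ^ m)) \<le> exp (1 / (1 - x) ^ 2)"
proof -
  have factor: "0 \<le> 1 / (1 - x ^ m) \<and> 1 / (1 - x ^ m) \<le> exp (x ^ m / (1 - x))" if "m \<in> A" for m
  proof -
    have "0 < m"
      using that assms(2) by (auto intro: gr0I)
    then have "x ^ m < 1"
      using assms(3,4) by (simp add: power_less_one_iff)
    then have "1 / (1 - x ^ m) = 1 + x ^ m / (1 - x ^ m)"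
      by (simp add: field_simps)
    also have "\<dots> \<le> 1 + x ^ m / (1 - x)"
      using norm_power_div_one_minus_power_le[of x m] \<open>0 < m\<close> \<open>x ^ m < 1\<close> assms(3,4) by simp
    also have "\<dots> \<le> exp (x ^ m / (1 - x))"
      by (rule exp_ge_add_one_self)
    finally show ?thesis
      using \<open>x ^ m < 1\<close> by simp
  qed
  have geometric: "summable (\<lambda>m. x ^ m / (1 - x))" "(\<Sum>m. x ^ m / (1 - x)) = 1 / (1 - x) ^ 2"
    using assms(3,4) by (simp_all add: summable_geometric suminf_divide suminf_geometric power2_eq_square)
  have "(\<Prod>m\<in>A. 1 / (1 - x ^ m)) \<le> (\<Prod>m\<in>A. exp (x ^ m / (1 - x)))"
    by (rule prod_mono) (use factor in blast)
  also have "\<dots> = exp (\<Sum>m\<in>A. x ^ m / (1 - x))"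
    by (simp add: exp_sum assms(1))
  also have "\<dots> \<le> exp (1 / (1 - x) ^ 2)"
    using sum_le_suminf[OF geometric(1) assms(1)] geometric(2) assms(3,4) by simp
  finally show ?thesis .
qed

lemma summable_norm_parts_in:
  fixes q :: "'a::{real_normed_field,banach}"
  assumes "0 \<notin> A" "norm q < 1"
  shows "summable (\<lambda>n. norm (of_nat (card (parts_in A n)) * q ^ n))"
proof -
  define x where "x = norm q"
  have x: "0 \<le> x" "x < 1"
    using assms(2) by (auto simp: x_def)
  have truncated: "(\<lambda>n. real (card (parts_in (A \<inter> {..N}) n)) * x ^ n)
                     sums (\<Prod>m\<in>A \<inter> {..N}. 1 / (1 - x ^ m))" for N
    using parts_in_finite_sums[of "A \<inter> {..N}" x] assms(1) x by simp
  have "summable (\<lambda>n. real (card (parts_in A n)) * x ^ n)"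
  proof (rule summableI_nonneg_bounded)
    fix N
    have "(\<Sum>n<N. real (card (parts_in A n)) * x ^ n)
            = (\<Sum>n<N. real (card (parts_in (A \<inter> {..N}) n)) * x ^ n)"
      by (intro sum.cong) (auto simp: parts_in_truncate)
    also have "\<dots> \<le> (\<Sum>n. real (card (parts_in (A \<inter> {..N}) n)) * x ^ n)"
      using truncated[of N] x by (intro sum_le_suminf) (auto simp: sums_iff)
    also have "\<dots> = (\<Prod>m\<in>A \<inter> {..N}. 1 / (1 - x ^ m))"
      using truncated[of N] by (simp add: sums_iff)
    also have "\<dots> \<le> exp (1 / (1 - x) ^ 2)"
      using assms(1) x by (intro prod_inverse_one_minus_power_le_exp) auto
    finally show "(\<Sum>n<N. real (card (parts_in A n)) * x ^ n) \<le> exp (1 / (1 - x) ^ 2)" .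
  qed (use x in simp)
  then show ?thesis
    by (simp add: x_def norm_mult norm_power)
qed

lemma parts_in_sums:
  fixes q :: "'a::{real_normed_field,banach}"
  assumes "0 \<notin> A" "norm q < 1"
    and lim: "(\<lambda>N. \<Prod>m\<in>A \<inter> {..N}. 1 / (1 - q ^ m)) \<longlonglongrightarrow> L"
  shows "(\<lambda>n. of_nat (card (parts_in A n)) * q ^ n) sums L"
proof -
  note summable = summable_norm_parts_in[OF assms(1,2)]
  have "(\<lambda>N. \<Sum>n. of_nat (card (parts_in (A \<inter> {..N}) n)) * q ^ n)
          \<longlonglongrightarrow> (\<Sum>n. of_nat (card (parts_in A n)) * q ^ n)"
  proof (rule tannerys_theorem[THEN conjunct2, THEN conjunct2])
    show "(\<lambda>N. of_nat (card (parts_in (A \<inter> {..N}) n)) * q ^ n)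
            \<longlonglongrightarrow> of_nat (card (parts_in A n)) * q ^ n" for n
      by (rule tendsto_eventually)
         (use eventually_ge_at_top[of n] in \<open>eventually_elim, simp add: parts_in_truncate\<close>)
    show "\<forall>\<^sub>F (n, N) in sequentially \<times>\<^sub>F sequentially.
            norm (of_nat (card (parts_in (A \<inter> {..N}) n)) * q ^ n)
              \<le> norm (of_nat (card (parts_in A n)) * q ^ n)"
    proof (intro always_eventually allI, clarify)
      fix n N
      have "card (parts_in (A \<inter> {..N}) n) \<le> card (parts_in A n)"
        using assms(1) by (intro card_parts_in_mono) auto
      then show "norm (of_nat (card (parts_in (A \<inter> {..N}) n)) * q ^ n)
                   \<le> norm (of_nat (card (parts_in A n)) * q ^ n)"
        by (simp add: norm_mult mult_right_mono)
    qed
  qed (use summable in auto)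
  moreover have "(\<lambda>N. \<Sum>n. of_nat (card (parts_in (A \<inter> {..N}) n)) * q ^ n)
                   = (\<lambda>N. \<Prod>m\<in>A \<inter> {..N}. 1 / (1 - q ^ m))"
    using parts_in_finite_sums[of "A \<inter> {..N}" q for N] assms(1,2) by (simp add: sums_iff)
  ultimately have "(\<lambda>N. \<Prod>m\<in>A \<inter> {..N}. 1 / (1 - q ^ m))
                     \<longlonglongrightarrow> (\<Sum>n. of_nat (card (parts_in A n)) * q ^ n)"
    by simp
  with lim have "(\<Sum>n. of_nat (card (parts_in A n)) * q ^ n) = L"
    by (rule LIMSEQ_unique[symmetric])
  then show ?thesis
    using summable_norm_cancel[OF summable] by (simp add: sums_iff)
qed

section \<open>The q-Pochhammer symbol\<close>

lemma convergent_prod_qpoch: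
  fixes w :: complex
  assumes "norm w < 1"
  shows "convergent_prod (\<lambda>n. 1 - w * w ^ n)"
proof (rule abs_convergent_prod_imp_convergent_prod)
  have "summable (\<lambda>n. norm w * norm w ^ n)"
    using assms by (intro summable_mult summable_geometric) simp
  then show "abs_convergent_prod (\<lambda>n. 1 - w * w ^ n)"
    unfolding abs_convergent_prod_conv_summable by (simp add: norm_mult norm_power)
qed

lemma qpoch_inf_LIMSEQ:
  fixes w :: complex
  assumes "norm w < 1"
  shows "(\<lambda>N. \<Prod>i<N. 1 - w * w ^ i) \<longlonglongrightarrow> qpoch_inf w w"
  unfolding qpoch_inf_def LIMSEQ_lessThan_iff_atMost[where f = "\<lambda>A. \<Prod>i\<in>A. 1 - w * w ^ i"]
  by (rule convergent_prod_LIMSEQ[OF convergent_prod_qpoch[OF assms]])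

lemma qpoch_inf_nonzero:
  fixes w :: complex
  assumes "norm w < 1"
  shows "qpoch_inf w w \<noteq> 0"
  unfolding qpoch_inf_def
proof (rule prodinf_nonzero[OF convergent_prod_qpoch[OF assms]])
  show "1 - w * w ^ i \<noteq> 0" for i
    using one_minus_power_neq_zero[OF assms, of "Suc i"] by simp
qed

lemma prod_multiples_atLeastAtMost:
  fixes k N :: nat
  assumes "0 < k"
  shows "(\<Prod>m\<in>{m \<in> {1..N}. k dvd m}. f m) = (\<Prod>j<N div k. f (k * Suc j))"
proof -
  have "inj_on (\<lambda>j. k * j) {1..N div k}"
    using assms by (auto intro: inj_onI)
  then show ?thesis
    unfolding multiples_atLeastAtMost_eq_image[OF assms]
    by (simp add: prod.reindex prod.atLeast1_atMost_eq[where n = "N div k", simplified])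
qed

definition indivisible_parts :: "nat \<Rightarrow> nat set" where
  "indivisible_parts k = {m. 0 < m \<and> \<not> k dvd m}"

lemma prod_indivisible_LIMSEQ:
  fixes q :: complex
  assumes q: "norm q < 1" and "0 < k"
  shows "(\<lambda>N. \<Prod>m\<in>indivisible_parts k \<inter> {..N}. 1 / (1 - q ^ m))
           \<longlonglongrightarrow> qpoch_inf (q ^ k) (q ^ k) / qpoch_inf q q"
proof -
  have qk: "norm (q ^ k) < 1"
    using assms by (simp add: norm_power power_less_one_iff)
  have factor: "(\<Prod>i<N. 1 - q * q ^ i) =
      (\<Prod>m\<in>indivisible_parts k \<inter> {..N}. 1 - q ^ m) * (\<Prod>j<N div k. 1 - q ^ k * (q ^ k) ^ j)" for N
  proof -
    have "(\<Prod>i<N. 1 - q * q ^ i) = (\<Prod>m\<in>{1..N}. 1 - q ^ m)"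
      by (simp add: prod.atLeast1_atMost_eq)
    also have "\<dots> = (\<Prod>m\<in>{1..N} \<inter> {m. k dvd m}. 1 - q ^ m) * (\<Prod>m\<in>{1..N} - {m. k dvd m}. 1 - q ^ m)"
      by (rule prod.Int_Diff) simp
    also have "{1..N} \<inter> {m. k dvd m} = {m \<in> {1..N}. k dvd m}"
      by auto
    also have "{1..N} - {m. k dvd m} = indivisible_parts k \<inter> {..N}"
      by (auto simp: indivisible_parts_def)
    also have "(\<Prod>m\<in>{m \<in> {1..N}. k dvd m}. 1 - q ^ m) = (\<Prod>j<N div k. 1 - q ^ k * (q ^ k) ^ j)"
      unfolding prod_multiples_atLeastAtMost[OF \<open>0 < k\<close>] by (simp only: power_mult power_Suc)
    finally show ?thesis
      by (simp add: mult.commute)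
  qed
  have "(\<Prod>j<N div k. 1 - q ^ k * (q ^ k) ^ j) \<noteq> 0" for N
    using one_minus_power_neq_zero[OF qk] by (simp flip: power_Suc)
  then have quotient: "(\<Prod>m\<in>indivisible_parts k \<inter> {..N}. 1 / (1 - q ^ m)) =
      (\<Prod>j<N div k. 1 - q ^ k * (q ^ k) ^ j) / (\<Prod>i<N. 1 - q * q ^ i)" for N
    by (simp add: factor prod_dividef)
  have "(\<lambda>N. \<Prod>j<N div k. 1 - q ^ k * (q ^ k) ^ j) \<longlonglongrightarrow> qpoch_inf (q ^ k) (q ^ k)"
    using filterlim_compose[OF qpoch_inf_LIMSEQ[OF qk] filterlim_at_top_div_const_nat[OF \<open>0 < k\<close>]]
    by (simp add: o_def)
  then show ?thesis
    unfolding quotient by (rule tendsto_divide[OF _ qpoch_inf_LIMSEQ[OF q] qpoch_inf_nonzero[OF q]])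
qed

section \<open>Lambert series\<close>

lemma sums_power_multiples:
  fixes w :: "'a::{real_normed_field,banach}"
  assumes "norm w < 1" "0 < m"
  shows "(\<lambda>j. w ^ (m * Suc j)) sums (w ^ m / (1 - w ^ m))"
proof -
  have "norm (w ^ m) < 1"
    using assms by (simp add: norm_power power_less_one_iff)
  moreover have "w ^ (m * Suc j) = w ^ m * (w ^ m) ^ j" for j
    by (simp only: power_mult power_Suc)
  ultimately show ?thesis
    using sums_mult[OF geometric_sums, of "w ^ m" "w ^ m"] by simp
qed

lemma summable_lambert_terms:
  fixes q :: "'a::{real_normed_field,banach}"
  assumes "norm q < 1" "0 \<notin> T"
  shows "summable (\<lambda>m. if m \<in> T then q ^ m / (1 - q ^ m) else 0)"
proof (rule summable_comparison_test)
  have "norm (if m \<in> T then q ^ m / (1 - q ^ m) else 0) \<le> norm q ^ m / (1 - norm q)" for m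
  proof (cases "m \<in> T")
    case True
    then have "0 < m"
      using assms(2) by (auto intro: gr0I)
    with True show ?thesis
      using norm_power_div_one_minus_power_le[OF assms(1)] by simp
  qed (use assms(1) in simp)
  then show "\<exists>N. \<forall>m\<ge>N. norm (if m \<in> T then q ^ m / (1 - q ^ m) else 0) \<le> norm q ^ m / (1 - norm q)"
    by blast
  show "summable (\<lambda>m. norm q ^ m / (1 - norm q))"
    using assms(1) by (intro summable_divide summable_geometric) simp
qed

lemma summable_on_lambert_double_series:
  fixes q :: "'a::{real_normed_field,banach}"
  assumes q: "norm q < 1" and T: "0 \<notin> T"
  shows "(\<lambda>(m, j). q ^ (m * Suc j)) summable_on T \<times> UNIV"
proof (rule abs_summable_summable)
  have pos: "0 < m" if "m \<in> T" for m
    using that T by (auto intro: gr0I)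
  show "(\<lambda>p. norm (case p of (m, j) \<Rightarrow> q ^ (m * Suc j))) summable_on T \<times> UNIV"
  proof (rule summable_on_SigmaI[where g = "\<lambda>m. norm q ^ m / (1 - norm q ^ m)"])
    fix m assume "m \<in> T"
    have "(\<lambda>j. norm q ^ (m * Suc j)) sums (norm q ^ m / (1 - norm q ^ m))"
      using sums_power_multiples[of "norm q" m] q pos[OF \<open>m \<in> T\<close>] by simp
    then show "((\<lambda>j. norm (case (m, j) of (m, j) \<Rightarrow> q ^ (m * Suc j)))
                 has_sum (norm q ^ m / (1 - norm q ^ m))) UNIV"
      by (simp add: norm_power sums_nonneg_imp_has_sum)
  next
    have "summable (\<lambda>m. norm q ^ m / (1 - norm q))"
      using q by (intro summable_divide summable_geometric) simp
    then have "(\<lambda>m. norm q ^ m / (1 - norm q)) summable_on UNIV"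
      using q by (subst summable_on_UNIV_nonneg_real_iff) auto
    then have "(\<lambda>m. norm q ^ m / (1 - norm q)) summable_on T"
      by (rule summable_on_subset_banach) simp
    then show "(\<lambda>m. norm q ^ m / (1 - norm q ^ m)) summable_on T"
    proof (rule summable_on_comparison_test)
      fix m assume "m \<in> T"
      then have "norm q ^ m < 1"
        using q pos by (simp add: power_less_one_iff)
      then show "0 \<le> norm q ^ m / (1 - norm q ^ m)"
        by simp
      show "norm q ^ m / (1 - norm q ^ m) \<le> norm q ^ m / (1 - norm q)"
        using norm_power_div_one_minus_power_le[of "norm q" m] q pos[OF \<open>m \<in> T\<close>] \<open>norm q ^ m < 1\<close>
        by simp
    qed
  qed simp
qed

lemma lambert_series_sums:
  fixes q :: "'a::{real_normed_field,banach}"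
  assumes q: "norm q < 1" and T: "0 \<notin> T"
  shows "(\<lambda>l. of_nat (card {m \<in> T. m dvd l \<and> l \<noteq> 0}) * q ^ l)
           sums (\<Sum>m. if m \<in> T then q ^ m / (1 - q ^ m) else 0)"
proof -
  \<comment> \<open>Both sides are groupings of the absolutely summable double series of the q^(m(j+1)),
     m in T: by m, and by l = m(j+1).\<close>
  define f where "f = (\<lambda>(m, j). q ^ (m * Suc j))"
  have pos: "0 < m" if "m \<in> T" for m
    using that T by (auto intro: gr0I)
  obtain S where S: "(f has_sum S) (T \<times> UNIV)"
    using summable_on_lambert_double_series[OF assms] has_sum_infsum unfolding f_def by blast
  have "((\<lambda>m. q ^ m / (1 - q ^ m)) has_sum S) T"
  proof (rule has_sum_SigmaD[OF S])
    fix m assume "m \<in> T"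
    have "summable (\<lambda>j. norm (q ^ (m * Suc j)))"
      using sums_power_multiples[of "norm q" m] q pos[OF \<open>m \<in> T\<close>] by (simp add: norm_power sums_iff)
    with sums_power_multiples[OF q pos[OF \<open>m \<in> T\<close>]]
    show "((\<lambda>j. f (m, j)) has_sum (q ^ m / (1 - q ^ m))) UNIV"
      unfolding f_def by (simp add: norm_summable_imp_has_sum)
  qed
  then have "((\<lambda>m. if m \<in> T then q ^ m / (1 - q ^ m) else 0) has_sum S) UNIV"
    by (subst has_sum_cong_neutral) auto
  then have by_m: "(\<Sum>m. if m \<in> T then q ^ m / (1 - q ^ m) else 0) = S"
    by (intro sums_unique[symmetric] has_sum_imp_sums)
  define D where "D l = {m \<in> T. m dvd l \<and> l \<noteq> 0}" for l
  have recover: "m * Suc (l div m - Suc 0) = l" if lm: "m \<in> T" "m dvd l" "0 < l" for l m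
  proof -
    obtain c where c: "l = m * c"
      using lm(2) by (rule dvdE)
    with lm(3) have "0 < c"
      by simp
    with c pos[OF lm(1)] show ?thesis
      by simp
  qed
  have "((\<lambda>(l, m). q ^ l) has_sum S) (Sigma UNIV D)"
    by (subst has_sum_reindex_bij_witness[where j = "\<lambda>(l, m). (m, l div m - Suc 0)"
                                             and i = "\<lambda>(m, j). (m * Suc j, m)"])
       (use S in \<open>auto simp: D_def f_def pos recover simp del: mult_Suc_right\<close>)
  then have "((\<lambda>l. of_nat (card (D l)) * q ^ l) has_sum S) UNIV"
  proof (rule has_sum_SigmaD)
    show "((\<lambda>m. (\<lambda>(l, m). q ^ l) (l, m)) has_sum (of_nat (card (D l)) * q ^ l)) (D l)" for l
      by (rule has_sum_finiteI) (auto intro: finite_subset[of _ "{..l}"] dest: dvd_imp_le simp: D_def)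
  qed
  then show ?thesis
    unfolding by_m D_def by (rule has_sum_imp_sums)
qed

lemma summable_norm_lambert_series:
  fixes q :: "'a::{real_normed_field,banach}"
  assumes "norm q < 1" "0 \<notin> T"
  shows "summable (\<lambda>l. norm (of_nat (card {m \<in> T. m dvd l \<and> l \<noteq> 0}) * q ^ l))"
  using lambert_series_sums[of "norm q" T] assms by (simp add: norm_mult norm_power sums_iff)

lemma lambert_sum_diff_multiples:
  fixes q :: "'a::{real_normed_field,banach}"
  assumes q: "norm q < 1" and "0 < k" "0 \<notin> T"
  shows "(\<Sum>m. if m \<in> T \<and> \<not> k dvd m then q ^ m / (1 - q ^ m) else 0)
           = (\<Sum>m. if m \<in> T then q ^ m / (1 - q ^ m) else 0)
             - (\<Sum>j. if j * k \<in> T then q ^ (j * k) / (1 - q ^ (j * k)) else 0)"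
proof -
  define h where "h m = (if m \<in> T \<and> k dvd m then q ^ m / (1 - q ^ m) else 0)" for m
  have "summable (\<lambda>m. if m \<in> {m \<in> T. \<not> k dvd m} then q ^ m / (1 - q ^ m) else 0)"
    and "summable (\<lambda>m. if m \<in> {m \<in> T. k dvd m} then q ^ m / (1 - q ^ m) else 0)"
    using assms(3) by (intro summable_lambert_terms[OF q]; auto)+
  then have indivisible: "summable (\<lambda>m. if m \<in> T \<and> \<not> k dvd m then q ^ m / (1 - q ^ m) else 0)"
    and "summable h"
    unfolding h_def by simp_all
  then have "(\<Sum>m. if m \<in> T then q ^ m / (1 - q ^ m) else 0)
           = (\<Sum>m. if m \<in> T \<and> \<not> k dvd m then q ^ m / (1 - q ^ m) else 0) + suminf h"
    unfolding h_def by (subst suminf_add) (auto intro!: suminf_cong)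
  moreover have "(\<lambda>j. h (j * k)) sums suminf h"
    using \<open>summable h\<close>
    by (subst sums_multiples_iff[OF \<open>0 < k\<close>]) (auto simp: h_def summable_sums)
  ultimately show ?thesis
    by (simp add: h_def sums_iff)
qed

section \<open>Parts congruent to r modulo t\<close>

definition counted_parts :: "nat \<Rightarrow> nat \<Rightarrow> nat \<Rightarrow> nat set" where
  "counted_parts k r t = {m \<in> indivisible_parts k. [m = r] (mod t)}"

lemma Dx_eq_convolution:
  "Dx k r t n = (\<Sum>l\<le>n. card {m \<in> counted_parts k r t. m dvd l \<and> l \<noteq> 0}
                            * card (parts_in (indivisible_parts k) (n - l)))"
proof -
  have "{M \<in> partitions n. k_indivisible k M} = parts_in (indivisible_parts k) n"
    by (auto simp: partitions_def k_indivisible_def parts_in_def indivisible_parts_def)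
  moreover have "filter_mset (\<lambda>x. [x = r] (mod t)) M = filter_mset (\<lambda>x. x \<in> counted_parts k r t) M"
    if "M \<in> parts_in (indivisible_parts k) n" for M
    using that by (intro filter_mset_cong0) (auto simp: parts_in_def counted_parts_def)
  ultimately have "Dx k r t n = (\<Sum>M\<in>parts_in (indivisible_parts k) n.
                                   size (filter_mset (\<lambda>x. x \<in> counted_parts k r t) M))"
    unfolding Dx_def by (auto intro!: sum.cong)
  also have "\<dots> = (\<Sum>l\<le>n. card {m \<in> counted_parts k r t. m dvd l \<and> l \<noteq> 0}
                            * card (parts_in (indivisible_parts k) (n - l)))"
    by (rule sum_size_filter_parts_in) (auto simp: indivisible_parts_def counted_parts_def)
  finally show ?thesis .
qed

lemma Dx_sums:
  fixes q :: complex
  assumes q: "norm q < 1" and "0 < k"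
  shows "(\<lambda>n. of_nat (Dx k r t n) * q ^ n) sums
           (qpoch_inf (q ^ k) (q ^ k) / qpoch_inf q q *
            (\<Sum>m. if m \<in> counted_parts k r t then q ^ m / (1 - q ^ m) else 0))"
proof -
  define c where "c l = card {m \<in> counted_parts k r t. m dvd l \<and> l \<noteq> 0}" for l
  define p where "p n = card (parts_in (indivisible_parts k) n)" for n
  have zero: "0 \<notin> indivisible_parts k" "0 \<notin> counted_parts k r t"
    by (simp_all add: indivisible_parts_def counted_parts_def)
  have p: "summable (\<lambda>n. norm (of_nat (p n) * q ^ n))"
    "(\<lambda>n. of_nat (p n) * q ^ n) sums (qpoch_inf (q ^ k) (q ^ k) / qpoch_inf q q)"
    unfolding p_def
    by (rule summable_norm_parts_in[OF zero(1) q],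
        rule parts_in_sums[OF zero(1) q prod_indivisible_LIMSEQ[OF assms]])
  have c: "summable (\<lambda>l. norm (of_nat (c l) * q ^ l))"
    "(\<lambda>l. of_nat (c l) * q ^ l)
       sums (\<Sum>m. if m \<in> counted_parts k r t then q ^ m / (1 - q ^ m) else 0)"
    unfolding c_def
    by (rule summable_norm_lambert_series[OF q zero(2)], rule lambert_series_sums[OF q zero(2)])
  have "(\<Sum>i\<le>n. (of_nat (c i) * q ^ i) * (of_nat (p (n - i)) * q ^ (n - i)))
          = of_nat (Dx k r t n) * q ^ n" for n
    unfolding sum_power_convolution[where a = "\<lambda>i. of_nat (c i)" and b = "\<lambda>i. of_nat (p i)"]
    by (simp add: Dx_eq_convolution c_def p_def)
  then show ?thesis
    using Cauchy_product_sums[OF c(1) p(1)] c(2) p(2) by (simp add: sums_iff mult.commute)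
qed

lemma lambert_sum_counted_parts_coprime:
  fixes q :: "'a::{real_normed_field,banach}"
  assumes q: "norm q < 1" and "0 < k" "coprime k t" "[rb * k = r] (mod t)"
  shows "(\<Sum>m. if m \<in> counted_parts k r t then q ^ m / (1 - q ^ m) else 0)
           = (\<Sum>m. if 1 \<le> m \<and> [m = r] (mod t) then q ^ m / (1 - q ^ m) else 0)
             - (\<Sum>m. if 1 \<le> m \<and> [m = rb] (mod t) then q ^ (m * k) / (1 - q ^ (m * k)) else 0)"
proof -
  have "[j * k = r] (mod t) \<longleftrightarrow> [j = rb] (mod t)" for j
    using assms(4) cong_mult_rcancel_nat[OF assms(3), of j rb] cong_sym cong_trans by metis
  then have "j * k \<in> {m. 1 \<le> m \<and> [m = r] (mod t)} \<longleftrightarrow> 1 \<le> j \<and> [j = rb] (mod t)" for j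
    using \<open>0 < k\<close> by (simp add: Suc_le_eq)
  moreover have "m \<in> counted_parts k r t \<longleftrightarrow> m \<in> {m. 1 \<le> m \<and> [m = r] (mod t)} \<and> \<not> k dvd m" for m
    by (auto simp: counted_parts_def indivisible_parts_def)
  ultimately show ?thesis
    using lambert_sum_diff_multiples[OF q \<open>0 < k\<close>, of "{m. 1 \<le> m \<and> [m = r] (mod t)}"] by simp
qed

theorem lemma3p1:
  fixes k t r :: nat and q :: complex
  assumes "k \<ge> 2" and "t \<ge> 2" and "1 \<le> r" and "r \<le> t" and "norm q < 1"
  shows "(\<lambda>n. of_nat (Dx k r t n) * q ^ n) sums
           (qpoch_inf (q ^ k) (q ^ k) / qpoch_inf q q *
            (\<Sum>m. if 1 \<le> m \<and> \<not> k dvd m \<and> [m = r] (mod t)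
                   then q ^ m / (1 - q ^ m) else 0)) \<and>
         (coprime k t \<longrightarrow> (\<forall>rb. 1 \<le> rb \<and> rb \<le> t \<and> [rb * k = r] (mod t) \<longrightarrow>
         (\<lambda>n. of_nat (Dx k r t n) * q ^ n) sums
           (qpoch_inf (q ^ k) (q ^ k) / qpoch_inf q q *
            ((\<Sum>m. if 1 \<le> m \<and> [m = r] (mod t) then q ^ m / (1 - q ^ m) else 0)
             - (\<Sum>m. if 1 \<le> m \<and> [m = rb] (mod t)
                     then q ^ (m * k) / (1 - q ^ (m * k)) else 0)))))"
proof -
  have "0 < k"
    using assms(1) by simp
  have "m \<in> counted_parts k r t \<longleftrightarrow> 1 \<le> m \<and> \<not> k dvd m \<and> [m = r] (mod t)" for m
    by (auto simp: counted_parts_def indivisible_parts_def)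
  then show ?thesis
    using Dx_sums[OF assms(5) \<open>0 < k\<close>, of r t]
      lambert_sum_counted_parts_coprime[OF assms(5) \<open>0 < k\<close>, of t _ r]
    by auto
qed

end
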